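(* Let $n>d\ge1$ and let $G$ be a connected graph with $n$ vertices and diameter $d$. Then $$\sigma_2(G)\ge g_2(d)+(n-1-d)\left\lceil\tfrac d2\right\rceil\left(\left\lceil\tfrac d2\right\rceil+1\right).$$ Equality holds for the tree consisting of a path $P$ of length $d$ plus $n-d-1$ leaves all adjacent to one vertex of $P$ of eccentricity $\lceil d/2\rceil$.
   Context: All graphs are finite, simple, undirected. For a connected graph $G$ and $u\in V(G)$, the eccentricity $\varepsilon_G(u)=\max_{v\in V(G)} d_G(u,v)$; the diameter is $\max_u\varepsilon_G(u)$. $\sigma_2(G)=\sum_{uv\in E(G)}\varepsilon_G(u)\varepsilon_G(v)$. Here $g_2(d)=\sum_{i=0}^{d-1}\max\{i,d-i\}\cdot\max\{i+1,d-i-1\}$ (the value of $\sigma_2$ on the path with $d$ edges), which equals $\frac{7d^3-4d}{12}$ for even $d$ and $\frac{7d^3-d+6}{12}$ for odd $d$. *)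

theory Defs
  imports Complex_Main
begin

definition simple_graph :: "'a set \<Rightarrow> ('a \<Rightarrow> 'a \<Rightarrow> bool) \<Rightarrow> bool" where
  "simple_graph V E \<longleftrightarrow> finite V \<and> (\<forall>u v. E u v \<longrightarrow> u \<in> V \<and> v \<in> V)
     \<and> (\<forall>u v. E u v \<longrightarrow> E v u) \<and> (\<forall>u. \<not> E u u)"

fun walk :: "('a \<Rightarrow> 'a \<Rightarrow> bool) \<Rightarrow> 'a list \<Rightarrow> bool" where
  "walk E [] = False"
| "walk E [x] = True"
| "walk E (x # y # xs) = (E x y \<and> walk E (y # xs))"

definition joined :: "('a \<Rightarrow> 'a \<Rightarrow> bool) \<Rightarrow> 'a \<Rightarrow> 'a \<Rightarrow> nat \<Rightarrow> bool" where
  "joined E u v k \<longleftrightarrow> (\<exists>xs. walk E xs \<and> hd xs = u \<and> last xs = v \<and> length xs = Suc k)"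

definition connected_graph :: "'a set \<Rightarrow> ('a \<Rightarrow> 'a \<Rightarrow> bool) \<Rightarrow> bool" where
  "connected_graph V E \<longleftrightarrow> simple_graph V E \<and> V \<noteq> {} \<and>
     (\<forall>u\<in>V. \<forall>v\<in>V. \<exists>k. joined E u v k)"

definition gdist :: "('a \<Rightarrow> 'a \<Rightarrow> bool) \<Rightarrow> 'a \<Rightarrow> 'a \<Rightarrow> nat" where
  "gdist E u v = (LEAST k. joined E u v k)"

definition ecc :: "'a set \<Rightarrow> ('a \<Rightarrow> 'a \<Rightarrow> bool) \<Rightarrow> 'a \<Rightarrow> nat" where
  "ecc V E u = Max ((\<lambda>v. gdist E u v) ` V)"

definition diameter :: "'a set \<Rightarrow> ('a \<Rightarrow> 'a \<Rightarrow> bool) \<Rightarrow> nat" where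
  "diameter V E = Max ((\<lambda>u. ecc V E u) ` V)"

definition edges :: "'a set \<Rightarrow> ('a \<Rightarrow> 'a \<Rightarrow> bool) \<Rightarrow> 'a set set" where
  "edges V E = {{u, v} | u v. u \<in> V \<and> v \<in> V \<and> E u v}"

definition sigma2 :: "'a set \<Rightarrow> ('a \<Rightarrow> 'a \<Rightarrow> bool) \<Rightarrow> nat" where
  "sigma2 V E = (\<Sum>e\<in>edges V E. \<Prod>u\<in>e. ecc V E u)"

definition g2 :: "nat \<Rightarrow> nat" where
  "g2 d = (\<Sum>i<d. max i (d - i) * max (i + 1) (d - i - 1))"

text \<open>The extremal tree on vertices {0..<n}: path 0 - 1 - ... - d, plus leaves d+1, ..., n-1
  all adjacent to path vertex c = d div 2 (which has eccentricity ceil(d/2) on the path).\<close>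
definition ext_tree_edge :: "nat \<Rightarrow> nat \<Rightarrow> nat \<Rightarrow> nat \<Rightarrow> bool" where
  "ext_tree_edge n d u v \<longleftrightarrow> u < n \<and> v < n \<and>
     ((u \<le> d \<and> v \<le> d \<and> (v = u + 1 \<or> u = v + 1))
      \<or> (u = d div 2 \<and> d < v) \<or> (v = d div 2 \<and> d < u))"

end

(* Let u = x_0, ..., x_d = w be a shortest walk between two vertices at distance d = diameter.
   Every vertex has eccentricity at least ceil(d/2), and x_i has eccentricity at least
   max i (d - i), so the edges of the walk alone weigh at least g2 d. Every vertex v off the walk
   claims its edges to neighbours one step closer to the nearer end (to either end when v is
   equidistant); no edge is claimed twice or lies on the walk. If v is strictly nearer to one end,
   a single claimed neighbour p already gives ecc v * ecc p >= c (c + 1) with c = ceil(d/2),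
   since v and p cannot both be within c of the far end. If v is equidistant and close to both
   ends, it claims two distinct edges of weight at least c^2 each. Summing over the n - 1 - d
   vertices off the walk gives the bound; for the extremal tree all distances are explicit. *)

theory Submission
  imports Defs
begin

lemma walk_iff_nth:
  "walk E xs \<longleftrightarrow> xs \<noteq> [] \<and> (\<forall>i. Suc i < length xs \<longrightarrow> E (xs ! i) (xs ! Suc i))"
proof (induction E xs rule: walk.induct)
  case (3 E x y xs)
  have "(\<forall>i. Suc i < length (x # y # xs) \<longrightarrow> E ((x # y # xs) ! i) ((x # y # xs) ! Suc i)) \<longleftrightarrow>
    E x y \<and> (\<forall>i. Suc i < length (y # xs) \<longrightarrow> E ((y # xs) ! i) ((y # xs) ! Suc i))"
    by (auto simp: nth_Cons split: nat.splits)
  with 3 show ?case by simp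
qed auto

lemma walk_append: "walk E xs \<Longrightarrow> walk E ys \<Longrightarrow> last xs = hd ys \<Longrightarrow> walk E (xs @ tl ys)"
proof (induction E xs rule: walk.induct)
  case (2 E x)
  then show ?case by (cases ys) auto
qed auto

lemma walk_rev:
  assumes sym: "\<And>a b. E a b \<Longrightarrow> E b a" and "walk E xs"
  shows "walk E (rev xs)"
  using assms(2)
proof (induction xs rule: induct_list012)
  case (3 x y zs)
  then have "walk E (rev (y # zs))" and "walk E [y, x]" using sym by auto
  then show ?case using walk_append[of E "rev (y # zs)" "[y, x]"] by simp
qed auto

lemma walk_take: "walk E xs \<Longrightarrow> i < length xs \<Longrightarrow> walk E (take (Suc i) xs)"
  unfolding walk_iff_nth by (auto simp: nth_take)

lemma walk_drop: "walk E xs \<Longrightarrow> i < length xs \<Longrightarrow> walk E (drop i xs)"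
  unfolding walk_iff_nth by (auto simp: nth_drop)

lemma walk_set_subset:
  assumes "\<And>a b. E a b \<Longrightarrow> a \<in> V \<and> b \<in> V" and "walk E xs" and "hd xs \<in> V"
  shows "set xs \<subseteq> V"
  using assms(2,3)
proof (induction xs rule: induct_list012)
  case (3 x y zs)
  then show ?case using assms(1)[of x y] by simp
qed auto

lemma walk_lipschitz_bound:
  assumes lip: "\<And>a b. E a b \<Longrightarrow> \<phi> b \<le> \<phi> a + 1" and "walk E xs"
  shows "\<phi> (last xs) \<le> \<phi> (hd xs) + (length xs - 1)"
  using assms(2)
proof (induction xs rule: induct_list012)
  case (3 x y zs)
  then show ?case using lip[of x y] by simp
qed auto

lemma joined_refl: "joined E u u 0"
  unfolding joined_def by (rule exI[of _ "[u]"]) simp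

lemma joined_0_iff: "joined E u v 0 \<longleftrightarrow> u = v"
  using joined_refl[of E u] unfolding joined_def by (auto simp: length_Suc_conv)

lemma joined_edge: "E u v \<Longrightarrow> joined E u v 1"
  unfolding joined_def by (rule exI[of _ "[u, v]"]) simp

lemma joined_trans:
  assumes "joined E u v k" and "joined E v w l"
  shows "joined E u w (k + l)"
proof -
  obtain xs where xs: "walk E xs" "hd xs = u" "last xs = v" "length xs = Suc k"
    using assms(1) unfolding joined_def by blast
  obtain ys where ys: "walk E ys" "hd ys = v" "last ys = w" "length ys = Suc l"
    using assms(2) unfolding joined_def by blast
  have "walk E (xs @ tl ys)" using walk_append xs ys by metis
  moreover have "hd (xs @ tl ys) = u" "last (xs @ tl ys) = w" "length (xs @ tl ys) = Suc (k + l)"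
    using xs ys by (auto simp: last_append length_Suc_conv)
  ultimately show ?thesis unfolding joined_def by blast
qed

lemma joined_sym: "(\<And>a b. E a b \<Longrightarrow> E b a) \<Longrightarrow> joined E u v k \<Longrightarrow> joined E v u k"
  unfolding joined_def by (metis walk_rev length_rev hd_rev last_rev)

lemma joined_lipschitz_bound:
  assumes "\<And>a b. E a b \<Longrightarrow> \<phi> b \<le> \<phi> a + 1" and "joined E u v k"
  shows "\<phi> v \<le> \<phi> u + k"
proof -
  obtain xs where "walk E xs" "hd xs = u" "last xs = v" "length xs = Suc k"
    using assms(2) unfolding joined_def by blast
  then show ?thesis using walk_lipschitz_bound[OF assms(1)] by fastforce
qed

lemma gdist_le: "joined E u v k \<Longrightarrow> gdist E u v \<le> k"
  unfolding gdist_def by (rule Least_le)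

lemma nat_ceiling_half: "nat \<lceil>real d / 2\<rceil> = (d + 1) div 2"
  by linarith

locale connected_simple_graph =
  fixes V :: "'a set" and E :: "'a \<Rightarrow> 'a \<Rightarrow> bool"
  assumes connected: "connected_graph V E"
begin

lemma finite_V: "finite V" and edge_in_V: "E u v \<Longrightarrow> u \<in> V \<and> v \<in> V"
  and edge_sym: "E u v \<Longrightarrow> E v u" and no_loop: "\<not> E u u" and V_nonempty: "V \<noteq> {}"
  using connected unfolding connected_graph_def simple_graph_def by auto

lemma joined_gdist: "u \<in> V \<Longrightarrow> v \<in> V \<Longrightarrow> joined E u v (gdist E u v)"
  using connected unfolding connected_graph_def gdist_def by (metis LeastI)

lemma gdist_commute: "u \<in> V \<Longrightarrow> v \<in> V \<Longrightarrow> gdist E u v = gdist E v u"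
  by (meson antisym joined_gdist gdist_le joined_sym edge_sym)

lemma gdist_triangle: "u \<in> V \<Longrightarrow> v \<in> V \<Longrightarrow> w \<in> V \<Longrightarrow> gdist E u w \<le> gdist E u v + gdist E v w"
  by (meson joined_gdist gdist_le joined_trans)

lemma gdist_eq_0D: "gdist E u v = 0 \<Longrightarrow> u \<in> V \<Longrightarrow> v \<in> V \<Longrightarrow> u = v"
  using joined_gdist joined_0_iff by metis

lemma gdist_across_edge: "E x y \<Longrightarrow> u \<in> V \<Longrightarrow> gdist E u y \<le> gdist E u x + 1"
  using gdist_triangle[of u x y] gdist_le[OF joined_edge, of E x y] edge_in_V[of x y] by auto

lemma gdist_Suc_neighbour:
  assumes "u \<in> V" "v \<in> V" "gdist E u v = Suc k"
  obtains x where "E v x" "gdist E u x = k"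
proof -
  have "joined E v u (Suc k)" using joined_gdist[OF assms(1,2)] assms(3) joined_sym edge_sym by metis
  then obtain x ys where walk: "walk E (v # x # ys)" and "last (x # ys) = u" "length ys = k"
    unfolding joined_def by (auto simp: length_Suc_conv)
  then have "E v x" and "joined E x u k" unfolding joined_def by auto
  then have "gdist E u x \<le> k" by (metis gdist_le joined_sym edge_sym)
  moreover have "Suc k \<le> gdist E u x + 1" using gdist_across_edge[of x v u] \<open>E v x\<close> assms edge_sym by metis
  ultimately show thesis using that \<open>E v x\<close> by simp
qed

lemma gdist_le_ecc: "u \<in> V \<Longrightarrow> v \<in> V \<Longrightarrow> gdist E u v \<le> ecc V E u"
  unfolding ecc_def using finite_V by auto

lemma gdist_le_ecc': "u \<in> V \<Longrightarrow> v \<in> V \<Longrightarrow> gdist E v u \<le> ecc V E u"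
  using gdist_le_ecc gdist_commute by metis

lemma gdist_le_twice_ecc: "u \<in> V \<Longrightarrow> w \<in> V \<Longrightarrow> x \<in> V \<Longrightarrow> gdist E u w \<le> 2 * ecc V E x"
  using gdist_triangle[of u x w] gdist_le_ecc'[of x u] gdist_le_ecc[of x w] by simp

lemma diameter_attained: "\<exists>u\<in>V. \<exists>w\<in>V. gdist E u w = diameter V E"
proof -
  obtain u where "u \<in> V" "ecc V E u = diameter V E"
    unfolding diameter_def using finite_V V_nonempty by (metis Max_in finite_imageI imageE image_is_empty)
  moreover obtain w where "w \<in> V" "ecc V E u = gdist E u w"
    unfolding ecc_def using finite_V V_nonempty by (metis Max_in finite_imageI imageE image_is_empty)
  ultimately show ?thesis by metis
qed

abbreviation weight :: "'a set \<Rightarrow> nat" where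
  "weight e \<equiv> \<Prod>z\<in>e. ecc V E z"

lemma finite_edges: "finite (edges V E)"
proof -
  have "edges V E \<subseteq> (\<lambda>(u, v). {u, v}) ` (V \<times> V)" unfolding edges_def by auto
  then show ?thesis using finite_V finite_subset by blast
qed

lemma sum_weight_le_sigma2: "A \<subseteq> edges V E \<Longrightarrow> sum weight A \<le> sigma2 V E"
  unfolding sigma2_def by (rule sum_mono2[OF finite_edges]) auto

lemma closer_neighbour_ecc_product:
  assumes a: "a \<in> V" and b: "b \<in> V" and v: "v \<in> V" "v \<noteq> a"
    and closer: "gdist E a v < gdist E b v"
  obtains p where "E v p" "gdist E a p < gdist E a v"
    "(gdist E a b + 1) div 2 * ((gdist E a b + 1) div 2 + 1) \<le> ecc V E v * ecc V E p"
proof -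
  let ?c = "(gdist E a b + 1) div 2"
  obtain k where k: "gdist E a v = Suc k" using gdist_eq_0D a v by (cases "gdist E a v") auto
  obtain p where p: "E v p" "gdist E a p = k" using gdist_Suc_neighbour[OF a v(1) k] by blast
  have p_in_V: "p \<in> V" using edge_in_V p by blast
  have "gdist E a b \<le> gdist E a p + gdist E p b" using gdist_triangle[OF a p_in_V b] .
  moreover have "gdist E p b \<le> ecc V E p" "gdist E b v \<le> ecc V E v"
    using gdist_le_ecc gdist_le_ecc' p_in_V b v by blast+
  moreover have "gdist E a b \<le> 2 * ecc V E v" "gdist E a b \<le> 2 * ecc V E p"
    using gdist_le_twice_ecc a b v p_in_V by blast+
  ultimately have "?c + 1 \<le> ecc V E v \<and> ?c \<le> ecc V E p \<or> ?c \<le> ecc V E v \<and> ?c + 1 \<le> ecc V E p"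
    using closer k p by linarith
  then have "?c * (?c + 1) \<le> ecc V E v * ecc V E p"
    by (metis mult.commute mult_le_mono)
  then show thesis using that p k by simp
qed

end

locale geodesic = connected_simple_graph +
  fixes u w :: 'a and xs :: "'a list" and d :: nat
  assumes walk_xs: "walk E xs" and hd_xs: "hd xs = u" and last_xs: "last xs = w"
    and length_xs: "length xs = Suc d" and u_in_V: "u \<in> V" and gdist_u_w: "gdist E u w = d"
begin

lemma xs_not_Nil: "xs \<noteq> []"
  using length_xs by auto

lemma set_xs_subset_V: "set xs \<subseteq> V"
  using walk_set_subset[OF _ walk_xs] edge_in_V hd_xs u_in_V by blast

lemma nth_xs_in_V: "i \<le> d \<Longrightarrow> xs ! i \<in> V"
  using set_xs_subset_V length_xs nth_mem[of i xs] by auto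

lemma w_in_V: "w \<in> V"
  using set_xs_subset_V last_xs last_in_set[OF xs_not_Nil] by blast

lemma gdist_nth_xs:
  assumes "i \<le> d"
  shows "gdist E u (xs ! i) = i" and "gdist E (xs ! i) w = d - i"
proof -
  have "joined E u (xs ! i) i"
    unfolding joined_def using walk_take[OF walk_xs, of i] assms hd_xs length_xs xs_not_Nil
    by (intro exI[of _ "take (Suc i) xs"]) (simp add: last_conv_nth min_def)
  then have "gdist E u (xs ! i) \<le> i" by (rule gdist_le)
  moreover have "joined E (xs ! i) w (d - i)"
    unfolding joined_def using walk_drop[OF walk_xs, of i] assms last_xs length_xs
    by (intro exI[of _ "drop i xs"]) (auto simp: hd_drop_conv_nth)
  then have "gdist E (xs ! i) w \<le> d - i" by (rule gdist_le)
  moreover have "d \<le> gdist E u (xs ! i) + gdist E (xs ! i) w"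
    using gdist_triangle[OF u_in_V nth_xs_in_V[OF assms] w_in_V] gdist_u_w by simp
  ultimately show "gdist E u (xs ! i) = i" "gdist E (xs ! i) w = d - i" using assms by linarith+
qed

lemma nth_xs_eq_iff: "i \<le> d \<Longrightarrow> j \<le> d \<Longrightarrow> xs ! i = xs ! j \<longleftrightarrow> i = j"
  using gdist_nth_xs(1) by metis

lemma distinct_xs: "distinct xs"
  using nth_xs_eq_iff length_xs by (simp add: distinct_conv_nth)

abbreviation half :: nat where
  "half \<equiv> (d + 1) div 2"

lemma half_le_ecc: "x \<in> V \<Longrightarrow> half \<le> ecc V E x"
  using gdist_le_twice_ecc[OF u_in_V w_in_V] gdist_u_w by fastforce

definition path_edges :: "'a set set" where
  "path_edges = (\<lambda>i. {xs ! i, xs ! Suc i}) ` {..<d}"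

lemma path_edges_subset: "path_edges \<subseteq> edges V E"
proof -
  have "E (xs ! i) (xs ! Suc i)" if "i < d" for i
    using walk_xs that length_xs unfolding walk_iff_nth by simp
  then show ?thesis unfolding path_edges_def edges_def using edge_in_V by blast
qed

lemma g2_le_weight_path_edges: "g2 d \<le> sum weight path_edges"
proof -
  have "inj_on (\<lambda>i. {xs ! i, xs ! Suc i}) {..<d}"
    by (auto simp: inj_on_def doubleton_eq_iff nth_xs_eq_iff)
  then have "sum weight path_edges = (\<Sum>i<d. ecc V E (xs ! i) * ecc V E (xs ! Suc i))"
    unfolding path_edges_def by (simp add: sum.reindex nth_xs_eq_iff)
  also have "g2 d \<le> \<dots>" unfolding g2_def
  proof (rule sum_mono, intro mult_le_mono)
    have ecc_nth: "max j (d - j) \<le> ecc V E (xs ! j)" if "j \<le> d" for j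
      using gdist_nth_xs[OF that] gdist_le_ecc'[OF nth_xs_in_V[OF that] u_in_V]
        gdist_le_ecc[OF nth_xs_in_V[OF that] w_in_V] by simp
    fix i assume "i \<in> {..<d}"
    then show "max i (d - i) \<le> ecc V E (xs ! i)" "max (i + 1) (d - i - 1) \<le> ecc V E (xs ! Suc i)"
      using ecc_nth[of i] ecc_nth[of "Suc i"] by simp_all
  qed
  finally show ?thesis .
qed

definition claims :: "'a \<Rightarrow> 'a \<Rightarrow> bool" where
  "claims v x \<longleftrightarrow> E v x \<and>
     (gdist E u v \<le> gdist E w v \<and> gdist E u x < gdist E u v \<or>
      gdist E w v \<le> gdist E u v \<and> gdist E w x < gdist E w v)"

definition claimed_edges :: "'a \<Rightarrow> 'a set set" where
  "claimed_edges v = {{v, x} | x. claims v x}"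

lemma claims_asym: "claims v x \<Longrightarrow> \<not> claims x v"
  unfolding claims_def by linarith

lemma claimed_edges_disjoint: "v \<noteq> v' \<Longrightarrow> claimed_edges v \<inter> claimed_edges v' = {}"
  unfolding claimed_edges_def using claims_asym by (auto simp: doubleton_eq_iff)

lemma claimed_edges_subset: "claimed_edges v \<subseteq> edges V E"
  unfolding claimed_edges_def edges_def claims_def using edge_in_V by blast

lemma finite_claimed_edges: "finite (claimed_edges v)"
  using claimed_edges_subset finite_edges finite_subset by blast

lemma path_edges_disjoint_claimed_edges: "v \<notin> set xs \<Longrightarrow> path_edges \<inter> claimed_edges v = {}"
  unfolding path_edges_def claimed_edges_def using length_xs
  by (auto simp: doubleton_eq_iff)

lemma sum_claimed_neighbours_le:
  assumes "\<And>p. p \<in> P \<Longrightarrow> claims v p"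
  shows "(\<Sum>p\<in>P. ecc V E v * ecc V E p) \<le> sum weight (claimed_edges v)"
proof -
  have "v \<notin> P" using assms no_loop unfolding claims_def by blast
  then have "weight {v, p} = ecc V E v * ecc V E p" if "p \<in> P" for p
    using that by (cases "v = p") auto
  moreover have "inj_on (\<lambda>p. {v, p}) P" by (auto simp: inj_on_def doubleton_eq_iff)
  ultimately have "(\<Sum>p\<in>P. ecc V E v * ecc V E p) = sum weight ((\<lambda>p. {v, p}) ` P)"
    by (simp add: sum.reindex)
  also have "\<dots> \<le> sum weight (claimed_edges v)"
    using assms by (intro sum_mono2[OF finite_claimed_edges]) (auto simp: claimed_edges_def)
  finally show ?thesis .
qed

lemma half_product_le_claimed_weight_equidistant:
  assumes v: "v \<in> V" "v \<noteq> u" and equidistant: "gdist E u v = gdist E w v"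
  shows "half * (half + 1) \<le> sum weight (claimed_edges v)"
proof -
  obtain k where k: "gdist E u v = Suc k" using gdist_eq_0D u_in_V v by (cases "gdist E u v") auto
  obtain p where p: "E v p" "gdist E u p = k" using gdist_Suc_neighbour[OF u_in_V v(1) k] by blast
  obtain q where q: "E v q" "gdist E w q = k"
    using gdist_Suc_neighbour[OF w_in_V v(1)] k equidistant by metis
  have claims: "claims v p" "claims v q" using p q k equidistant unfolding claims_def by auto
  have p_in_V: "p \<in> V" and q_in_V: "q \<in> V" using p q edge_in_V by blast+
  have half_le: "half \<le> ecc V E v" "half \<le> ecc V E p" "half \<le> ecc V E q"
    using half_le_ecc v p_in_V q_in_V by blast+
  show ?thesis
  proof (cases "half < Suc k")
    case True
    then have "half + 1 \<le> ecc V E v" using gdist_le_ecc'[OF v(1) u_in_V] k by simp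
    then have "half * (half + 1) \<le> ecc V E v * ecc V E p"
      using half_le by (metis mult.commute mult_le_mono)
    then show ?thesis using sum_claimed_neighbours_le[of "{p}" v] claims by simp
  next
    case False
    text \<open>Now 2 k < d, so q is farther than k from u; hence p \<noteq> q and v claims two edges.\<close>
    have "d \<le> gdist E u q + gdist E q w" using gdist_triangle[OF u_in_V q_in_V w_in_V] gdist_u_w by simp
    then have "p \<noteq> q" using False p q gdist_commute[OF q_in_V w_in_V] by auto
    have "half * half \<le> ecc V E v * ecc V E p" "half * half \<le> ecc V E v * ecc V E q"
      using half_le mult_le_mono by blast+
    moreover have "ecc V E v * ecc V E p + ecc V E v * ecc V E q \<le> sum weight (claimed_edges v)"
      using sum_claimed_neighbours_le[of "{p, q}" v] claims \<open>p \<noteq> q\<close> by auto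
    moreover have "half \<le> half * half" by (simp add: le_square)
    ultimately show ?thesis by (simp only: distrib_left mult_1_right)
  qed
qed

lemma half_product_le_claimed_weight:
  assumes v: "v \<in> V" "v \<notin> set xs"
  shows "half * (half + 1) \<le> sum weight (claimed_edges v)"
proof -
  have "v \<noteq> u" "v \<noteq> w" using v hd_xs last_xs hd_in_set last_in_set xs_not_Nil by blast+
  have gdist_w_u: "gdist E w u = d" using gdist_commute u_in_V w_in_V gdist_u_w by metis
  consider (nearer_u) "gdist E u v < gdist E w v" | (nearer_w) "gdist E w v < gdist E u v"
    | (equidistant) "gdist E u v = gdist E w v" by linarith
  then show ?thesis
  proof cases
    case nearer_u
    then obtain p where "claims v p" "half * (half + 1) \<le> ecc V E v * ecc V E p"
      using closer_neighbour_ecc_product[OF u_in_V w_in_V v(1) \<open>v \<noteq> u\<close>] gdist_u_w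
      unfolding claims_def by (metis less_imp_le)
    then show ?thesis using sum_claimed_neighbours_le[of "{p}" v] by simp
  next
    case nearer_w
    then obtain p where "claims v p" "half * (half + 1) \<le> ecc V E v * ecc V E p"
      using closer_neighbour_ecc_product[OF w_in_V u_in_V v(1) \<open>v \<noteq> w\<close>] gdist_w_u
      unfolding claims_def by (metis less_imp_le)
    then show ?thesis using sum_claimed_neighbours_le[of "{p}" v] by simp
  next
    case equidistant
    then show ?thesis using half_product_le_claimed_weight_equidistant v \<open>v \<noteq> u\<close> by blast
  qed
qed

lemma sigma2_lower_bound: "g2 d + (card V - 1 - d) * half * (half + 1) \<le> sigma2 V E"
proof -
  let ?N = "V - set xs"
  have finite_N: "finite ?N" using finite_V by blast
  have card_N: "card ?N = card V - 1 - d"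
    using distinct_card[OF distinct_xs] length_xs set_xs_subset_V finite_V by (simp add: card_Diff_subset)
  have "sum weight (\<Union>v\<in>?N. claimed_edges v) = (\<Sum>v\<in>?N. sum weight (claimed_edges v))"
    using claimed_edges_disjoint by (intro sum.UNION_disjoint[OF finite_N]) (auto simp: finite_claimed_edges)
  moreover have "sum weight (path_edges \<union> (\<Union>v\<in>?N. claimed_edges v))
      = sum weight path_edges + sum weight (\<Union>v\<in>?N. claimed_edges v)"
    using path_edges_disjoint_claimed_edges finite_N finite_claimed_edges
    by (intro sum.union_disjoint) (auto simp: path_edges_def)
  moreover have "sum weight (path_edges \<union> (\<Union>v\<in>?N. claimed_edges v)) \<le> sigma2 V E"
    using path_edges_subset claimed_edges_subset by (intro sum_weight_le_sigma2) blast
  moreover have "(card V - 1 - d) * half * (half + 1) = (\<Sum>v\<in>?N. half * (half + 1))"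
    using card_N by (simp only: sum_constant mult.assoc of_nat_id)
  moreover have "\<dots> \<le> (\<Sum>v\<in>?N. sum weight (claimed_edges v))"
    using half_product_le_claimed_weight by (intro sum_mono) auto
  ultimately show ?thesis using g2_le_weight_path_edges by linarith
qed

end

lemma (in connected_simple_graph) sigma2_ge_diameter:
  defines "D \<equiv> diameter V E"
  shows "g2 D + (card V - 1 - D) * ((D + 1) div 2) * ((D + 1) div 2 + 1) \<le> sigma2 V E"
proof -
  obtain u w where "u \<in> V" "w \<in> V" "gdist E u w = D" using diameter_attained D_def by metis
  moreover obtain xs where "walk E xs" "hd xs = u" "last xs = w" "length xs = Suc D"
    using joined_gdist[OF calculation(1,2)] calculation(3) unfolding joined_def by metis
  ultimately interpret geodesic V E u w xs D by unfold_locales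
  show ?thesis by (rule sigma2_lower_bound)
qed

text \<open>For d = 1 the centre 0 is an end of the spine, and extra leaves would raise the
  eccentricity of the other end; hence the hypothesis no_star.\<close>
locale ext_tree =
  fixes n d :: nat
  assumes d_pos: "1 \<le> d" and d_less_n: "d < n" and no_star: "2 \<le> d \<or> n = d + 1"
begin

abbreviation T :: "nat \<Rightarrow> nat \<Rightarrow> bool" where
  "T \<equiv> ext_tree_edge n d"

abbreviation centre :: nat where
  "centre \<equiv> d div 2"

definition spine :: "nat \<Rightarrow> nat" where
  "spine x = (if x \<le> d then x else centre)"

definition off_spine :: "nat \<Rightarrow> nat" where
  "off_spine x = (if x \<le> d then 0 else 1)"

definition tree_dist :: "nat \<Rightarrow> nat \<Rightarrow> nat" where
  "tree_dist x y = (if x = y then 0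
     else max (spine x) (spine y) - min (spine x) (spine y) + off_spine x + off_spine y)"

lemma T_sym: "T a b \<Longrightarrow> T b a"
  unfolding ext_tree_edge_def by auto

lemma tree_dist_lipschitz: "T a b \<Longrightarrow> tree_dist x b \<le> tree_dist x a + 1"
  unfolding ext_tree_edge_def tree_dist_def spine_def off_spine_def
  by (auto simp: max_def min_def split: if_splits)

lemma joined_spine: "i \<le> j \<Longrightarrow> j \<le> d \<Longrightarrow> joined T i j (j - i)"
proof (induction j)
  case (Suc j)
  show ?case
  proof (cases "i = Suc j")
    case False
    then have "joined T i j (j - i)" using Suc by simp
    moreover have "T j (Suc j)" unfolding ext_tree_edge_def using Suc d_less_n by auto
    ultimately have "joined T i (Suc j) (j - i + 1)" using joined_trans joined_edge by metis
    then show ?thesis using False Suc by (simp add: Suc_diff_le)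
  qed (simp add: joined_refl)
qed (simp add: joined_refl)

lemma joined_spine': "i \<le> d \<Longrightarrow> j \<le> d \<Longrightarrow> joined T i j (max i j - min i j)"
  using joined_spine[of i j] joined_spine[of j i] joined_sym[of T j i, OF T_sym]
  by (cases "i \<le> j") (simp_all add: max_def min_def)

lemma joined_centre: "x < n \<Longrightarrow> joined T x centre (max (spine x) centre - min (spine x) centre + off_spine x)"
proof (cases "x \<le> d")
  case True
  then show ?thesis using joined_spine'[of x centre] unfolding spine_def off_spine_def by simp
next
  case False
  assume "x < n"
  then have "T x centre" unfolding ext_tree_edge_def using False d_less_n by simp
  then show ?thesis using False joined_edge unfolding spine_def off_spine_def by fastforce
qed

lemma joined_tree_dist:
  assumes "x < n" "y < n"
  shows "joined T x y (tree_dist x y)"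
proof (cases "x = y \<or> x \<le> d \<and> y \<le> d")
  case True
  then show ?thesis
    using joined_refl joined_spine'[of x y] unfolding tree_dist_def spine_def off_spine_def by auto
next
  case False
  have "joined T x y (max (spine x) centre - min (spine x) centre + off_spine x
      + (max (spine y) centre - min (spine y) centre + off_spine y))"
    using joined_trans[OF joined_centre[OF assms(1)] joined_sym[OF T_sym joined_centre[OF assms(2)]]] .
  moreover have "max (spine x) centre - min (spine x) centre + off_spine x
      + (max (spine y) centre - min (spine y) centre + off_spine y) = tree_dist x y"
    using False unfolding tree_dist_def spine_def off_spine_def by (auto simp: max_def min_def)
  ultimately show ?thesis by simp
qed

lemma gdist_eq_tree_dist: "x < n \<Longrightarrow> y < n \<Longrightarrow> gdist T x y = tree_dist x y"
  unfolding gdist_def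
proof (rule Least_equality)
  show "joined T x y k \<Longrightarrow> tree_dist x y \<le> k" for k
    using joined_lipschitz_bound[of T "tree_dist x", OF tree_dist_lipschitz]
    by (fastforce simp: tree_dist_def[of x x])
qed (rule joined_tree_dist)

lemma ecc_eq_Max_tree_dist: "x < n \<Longrightarrow> ecc {0..<n} T x = Max (tree_dist x ` {0..<n})"
  unfolding ecc_def using gdist_eq_tree_dist by (metis atLeastLessThan_iff image_cong)

lemma ecc_spine:
  assumes "x \<le> d"
  shows "ecc {0..<n} T x = max x (d - x)"
proof -
  have "Max (tree_dist x ` {0..<n}) = max x (d - x)"
  proof (rule Max_eqI)
    fix m assume "m \<in> tree_dist x ` {0..<n}"
    then obtain y where "y < n" "m = tree_dist x y" by auto
    then show "m \<le> max x (d - x)"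
      using assms no_star unfolding tree_dist_def spine_def off_spine_def
      by (auto simp: max_def min_def split: if_splits)
  next
    have "tree_dist x 0 = x" "tree_dist x d = d - x"
      using assms unfolding tree_dist_def spine_def off_spine_def by auto
    then show "max x (d - x) \<in> tree_dist x ` {0..<n}"
      using d_less_n by (metis atLeastLessThan_iff image_eqI max_def le0 le_less_trans)
  qed auto
  then show ?thesis using ecc_eq_Max_tree_dist assms d_less_n by simp
qed

lemma ecc_leaf:
  assumes "d < x" "x < n"
  shows "ecc {0..<n} T x = d - centre + 1"
proof -
  have "Max (tree_dist x ` {0..<n}) = d - centre + 1"
  proof (rule Max_eqI)
    fix m assume "m \<in> tree_dist x ` {0..<n}"
    then obtain y where "y < n" "m = tree_dist x y" by auto
    then show "m \<le> d - centre + 1"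
      using assms d_pos unfolding tree_dist_def spine_def off_spine_def
      by (auto simp: max_def min_def split: if_splits)
  next
    have "tree_dist x d = d - centre + 1"
      using assms unfolding tree_dist_def spine_def off_spine_def by auto
    then show "d - centre + 1 \<in> tree_dist x ` {0..<n}"
      using d_less_n by (metis atLeastLessThan_iff image_eqI zero_le)
  qed auto
  then show ?thesis using ecc_eq_Max_tree_dist assms by simp
qed

lemma edges_ext_tree:
  "edges {0..<n} T = (\<lambda>i. {i, Suc i}) ` {..<d} \<union> (\<lambda>l. {centre, l}) ` {d<..<n}"
proof (intro equalityI subsetI)
  fix e assume "e \<in> edges {0..<n} T"
  then obtain a b where "e = {a, b}" "T a b" unfolding edges_def by blast
  then consider "a < d" "e = {a, Suc a}" | "b < d" "e = {b, Suc b}" | "d < b" "b < n" "e = {centre, b}"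
    | "d < a" "a < n" "e = {centre, a}"
    unfolding ext_tree_edge_def by (auto simp: insert_commute)
  then show "e \<in> (\<lambda>i. {i, Suc i}) ` {..<d} \<union> (\<lambda>l. {centre, l}) ` {d<..<n}"
    by cases auto
next
  fix e assume "e \<in> (\<lambda>i. {i, Suc i}) ` {..<d} \<union> (\<lambda>l. {centre, l}) ` {d<..<n}"
  then consider i where "i < d" "e = {i, Suc i}" | l where "d < l" "l < n" "e = {centre, l}" by auto
  then show "e \<in> edges {0..<n} T"
  proof cases
    case 1
    then have "i < n \<and> Suc i < n \<and> T i (Suc i)" unfolding ext_tree_edge_def using d_less_n by auto
    then show ?thesis unfolding edges_def using 1 by auto
  next
    case 2
    then have "centre < n \<and> l < n \<and> T centre l" unfolding ext_tree_edge_def using d_less_n by auto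
    then show ?thesis unfolding edges_def using 2 by auto
  qed
qed

lemma sigma2_ext_tree: "sigma2 {0..<n} T = g2 d + (n - 1 - d) * ((d + 1) div 2) * ((d + 1) div 2 + 1)"
proof -
  let ?w = "\<lambda>e. \<Prod>z\<in>e. ecc {0..<n} T z"
  have "d - centre = (d + 1) div 2" "card {d<..<n} = n - 1 - d" by simp_all
  have "inj_on (\<lambda>i. {i, Suc i}) {..<d}" "inj_on (\<lambda>l. {centre, l}) {d<..<n}"
    by (auto simp: inj_on_def doubleton_eq_iff)
  moreover have "(\<lambda>i. {i, Suc i}) ` {..<d} \<inter> (\<lambda>l. {centre, l}) ` {d<..<n} = {}"
    by (auto simp: doubleton_eq_iff)
  ultimately have "sigma2 {0..<n} T = (\<Sum>i<d. ?w {i, Suc i}) + (\<Sum>l\<in>{d<..<n}. ?w {centre, l})"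
    unfolding sigma2_def edges_ext_tree by (simp add: sum.union_disjoint sum.reindex)
  also have "(\<Sum>i<d. ?w {i, Suc i}) = g2 d"
    unfolding g2_def using ecc_spine by (intro sum.cong) auto
  also have "(\<Sum>l\<in>{d<..<n}. ?w {centre, l}) = (\<Sum>l\<in>{d<..<n}. (d - centre) * (d - centre + 1))"
    using ecc_spine[of centre] ecc_leaf by (intro sum.cong) auto
  also have "\<dots> = (n - 1 - d) * ((d + 1) div 2) * ((d + 1) div 2 + 1)"
    unfolding sum_constant of_nat_id \<open>d - centre = (d + 1) div 2\<close> \<open>card {d<..<n} = n - 1 - d\<close>
    by (simp only: mult.assoc)
  finally show ?thesis .
qed

end

theorem corollary3p3:
  fixes V :: "'a set" and E :: "'a \<Rightarrow> 'a \<Rightarrow> bool" and n d :: nat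
  assumes "connected_graph V E" and "card V = n" and "diameter V E = d"
    and "1 \<le> d" and "d < n"
  shows "sigma2 V E \<ge> g2 d + (n - 1 - d) * nat \<lceil>real d / 2\<rceil> * (nat \<lceil>real d / 2\<rceil> + 1)
    \<and> ((2 \<le> d \<or> n = d + 1) \<longrightarrow>
         sigma2 {0..<n} (ext_tree_edge n d)
           = g2 d + (n - 1 - d) * nat \<lceil>real d / 2\<rceil> * (nat \<lceil>real d / 2\<rceil> + 1))"
proof (intro conjI impI)
  interpret connected_simple_graph V E by (rule connected_simple_graph.intro) fact
  show "sigma2 V E \<ge> g2 d + (n - 1 - d) * nat \<lceil>real d / 2\<rceil> * (nat \<lceil>real d / 2\<rceil> + 1)"
    using sigma2_ge_diameter assms(2,3) unfolding nat_ceiling_half by simp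
next
  assume "2 \<le> d \<or> n = d + 1"
  then interpret ext_tree n d using assms(4,5) by unfold_locales
  show "sigma2 {0..<n} (ext_tree_edge n d)
      = g2 d + (n - 1 - d) * nat \<lceil>real d / 2\<rceil> * (nat \<lceil>real d / 2\<rceil> + 1)"
    unfolding nat_ceiling_half by (rule sigma2_ext_tree)
qed

end
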